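(* Let $R\in\mathfrak{U}$ and $\mathfrak{U}'\subseteq\mathfrak{U}$, and suppose that either $\mathfrak{U}'=\mathfrak{U}$, or $R\in\mathfrak{C}_o$ and $\mathfrak{C}_o\subseteq\mathfrak{U}'\subseteq\mathfrak{U}$. Then for every $S\in\mathfrak{U}$, the following are equivalent: - $R\sqsubseteq_\Gamma S$ with respect to $\mathfrak{U}'$; - $\#\mathcal{S}_u(G,R)\le\#\mathcal{S}_u(G,S)$ for all $G\in\mathfrak{U}'$. Moreover, the latter condition implies $\#\mathcal{H}_u(G,R)\le\#\mathcal{H}_u(G,S)$ for all $G\in\mathfrak{U}'$.
   Context: **Undirected graphs.** - An undirected graph $G$ consists of a finite non-empty vertex set $V(G)$ and an edge set $E(G)$ of subsets of $V(G)$ of size 1 or 2. One-element edges are loops. - $G^*$ is $G$ with all loops removed. - $\mathfrak{U}$ is the class of undirected graphs. - A homomorphism $\zeta:G\to H$ is a map $V(G)\to V(H)$ with $\{\zeta(v),\zeta(w)\}\in E(H)$ for every $\{v,w\}\in E(G)$. $\mathcal{H}_u(G,H)$ is the set of homomorphisms. - $\mathcal{S}_u(G,H)=\mathcal{H}_u(G,H)\cap\mathcal{H}_u(G^*,H^* )$ is the set of strict homomorphisms, i.e. those mapping every two-element edge to a two-element edge. - $\mathfrak{C}_o=\{G\in\mathfrak{U}:G^*\text{ contains no cycle of odd length}\}$. **Connectivity.** - $v,w$ are adjacent if $v\neq w$ and $\{v,w\}\in E(G)$. - For $X\subseteq V(G)$ and $v,w\in X$, the vertices $v$ and $w$ are connected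 in $X$ if $v=w$, or if there are $z_0=v,\dots,z_I=w$ in $X$ with consecutive terms adjacent. - $\gamma_X(v)$ is the set of such $w$. - $\Gamma_\zeta(v)=\gamma_{\zeta^{-1}(\zeta(v))}(v)$. **Schemes.** - $\mathfrak{U}'_r$ is a fixed system of representatives of $\mathfrak{U}'$ up to isomorphism. - $R\sqsubseteq_\Gamma S$ with respect to $\mathfrak{U}'$ means there exist injective maps $\rho_G:\mathcal{H}_u(G,R)\to\mathcal{H}_u(G,S)$, $G\in\mathfrak{U}'_r$, with $\Gamma_{\rho_G(\zeta)}(v)=\Gamma_\zeta(v)$ for all $G$, $\zeta$ and $v$. *)

theory Defs
  imports "HOL-Library.FuncSet"
begin

record 'a ugraph =
  verts :: "'a set"
  edges :: "'a set set"

definition ugraph :: "('a, 'b) ugraph_scheme \<Rightarrow> bool" where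
  "ugraph G \<longleftrightarrow> finite (verts G) \<and> verts G \<noteq> {} \<and>
     (\<forall>e\<in>edges G. e \<subseteq> verts G \<and> (card e = 1 \<or> card e = 2))"

definition loopfree :: "'a ugraph \<Rightarrow> 'a ugraph" where
  "loopfree G = \<lparr>verts = verts G, edges = {e\<in>edges G. card e = 2}\<rparr>"

definition hom :: "'c ugraph \<Rightarrow> 'a ugraph \<Rightarrow> ('c \<Rightarrow> 'a) set" where
  "hom G H = {\<zeta> \<in> verts G \<rightarrow>\<^sub>E verts H. \<forall>e\<in>edges G. \<zeta> ` e \<in> edges H}"

definition strict_hom :: "'c ugraph \<Rightarrow> 'a ugraph \<Rightarrow> ('c \<Rightarrow> 'a) set" where
  "strict_hom G H = hom G H \<inter> hom (loopfree G) (loopfree H)"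

definition has_odd_cycle :: "'a ugraph \<Rightarrow> bool" where
  "has_odd_cycle G \<longleftrightarrow> (\<exists>k vs. odd k \<and> 3 \<le> k \<and> inj_on vs {..<k} \<and>
      (\<forall>i<k. vs i \<in> verts G \<and> {vs i, vs (Suc i mod k)} \<in> edges G))"

definition in_Co :: "'a ugraph \<Rightarrow> bool" where
  "in_Co G \<longleftrightarrow> ugraph G \<and> \<not> has_odd_cycle (loopfree G)"

definition adjacent :: "'a ugraph \<Rightarrow> 'a \<Rightarrow> 'a \<Rightarrow> bool" where
  "adjacent G v w \<longleftrightarrow> v \<noteq> w \<and> {v, w} \<in> edges G"

definition connected_in :: "'a ugraph \<Rightarrow> 'a set \<Rightarrow> 'a \<Rightarrow> 'a \<Rightarrow> bool" where
  "connected_in G X v w \<longleftrightarrow> v = w \<or>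
     (\<exists>zs. zs \<noteq> [] \<and> hd zs = v \<and> last zs = w \<and> set zs \<subseteq> X \<and>
        (\<forall>i. Suc i < length zs \<longrightarrow> adjacent G (zs ! i) (zs ! Suc i)))"

definition gamma :: "'a ugraph \<Rightarrow> 'a set \<Rightarrow> 'a \<Rightarrow> 'a set" where
  "gamma G X v = {w \<in> X. connected_in G X v w}"

definition Gamma :: "'c ugraph \<Rightarrow> ('c \<Rightarrow> 'a) \<Rightarrow> 'c \<Rightarrow> 'c set" where
  "Gamma G \<zeta> v = gamma G {u \<in> verts G. \<zeta> u = \<zeta> v} v"

definition iso :: "'c ugraph \<Rightarrow> 'd ugraph \<Rightarrow> bool" where
  "iso G H \<longleftrightarrow> (\<exists>f. bij_betw f (verts G) (verts H) \<and> (\<lambda>e. f ` e) ` edges G = edges H)"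

definition rep_system :: "'c ugraph set \<Rightarrow> 'c ugraph set \<Rightarrow> bool" where
  "rep_system U' Ur \<longleftrightarrow> Ur \<subseteq> U' \<and> (\<forall>G\<in>U'. \<exists>!H. H \<in> Ur \<and> iso G H)"

text \<open>R \<sqsubseteq>_Gamma S with respect to U' (with representative system Ur).\<close>
definition sqsub_Gamma ::
  "'c ugraph set \<Rightarrow> 'a ugraph \<Rightarrow> 'b ugraph \<Rightarrow> bool" where
  "sqsub_Gamma Ur R S \<longleftrightarrow>
     (\<exists>\<rho> :: 'c ugraph \<Rightarrow> ('c \<Rightarrow> 'a) \<Rightarrow> ('c \<Rightarrow> 'b).
        \<forall>G\<in>Ur. inj_on (\<rho> G) (hom G R) \<and> \<rho> G ` hom G R \<subseteq> hom G S \<and>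
          (\<forall>\<zeta>\<in>hom G R. \<forall>v\<in>verts G. Gamma G (\<rho> G \<zeta>) v = Gamma G \<zeta> v))"

end

(* A homomorphism zeta : G -> R is described, as far as both conditions are concerned, by the
   edges it collapses: Gamma_zeta(v) is the component of v in the graph of edges {a, b} with
   zeta a = zeta b, and zeta is strict iff it collapses no edge.  Hence a family rho preserving the
   Gamma-classes maps strict homomorphisms injectively to strict ones; this gives the inequality
   for the representatives, and it transfers to all of U' along isomorphisms.

   Conversely, contracting the Gamma_zeta-classes of G gives a quotient Q through which zeta
   factors as a strict homomorphism Q -> R.  Q lies in U': odd cycles survive strict
   homomorphisms, so Q has none when R has none.  The counting hypothesis therefore yields an
   injection strict(Q, R) -> strict(Q, S), and composing the image of the factor with the
   quotient map defines rho(zeta), which collapses exactly the edges zeta collapses.  Since the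
   quotient is determined by the collapsed edges, rho is injective; in particular it also bounds
   #hom(G, R) by #hom(G, S). *)

theory Submission
  imports Defs
begin

section \<open>Collapsed edges and the classes \<open>Gamma\<close>\<close>

definition adjacent_in :: "'a ugraph \<Rightarrow> 'a set \<Rightarrow> 'a \<Rightarrow> 'a \<Rightarrow> bool" where
  "adjacent_in G X a b \<longleftrightarrow> a \<in> X \<and> b \<in> X \<and> adjacent G a b"

lemma successively_imp_rtranclp:
  "successively P zs \<Longrightarrow> zs \<noteq> [] \<Longrightarrow> P\<^sup>*\<^sup>* (hd zs) (last zs)"
proof (induction zs)
  case (Cons z zs)
  then show ?case
    by (cases "zs = []") (auto simp: successively_Cons intro: converse_rtranclp_into_rtranclp)
qed simp

lemma connected_in_iff_rtranclp: "connected_in G X v w \<longleftrightarrow> (adjacent_in G X)\<^sup>*\<^sup>* v w"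
proof
  assume "connected_in G X v w"
  then consider "v = w" | zs where "zs \<noteq> []" "hd zs = v" "last zs = w" "set zs \<subseteq> X"
    "successively (adjacent G) zs"
    unfolding connected_in_def successively_conv_nth by blast
  then show "(adjacent_in G X)\<^sup>*\<^sup>* v w"
  proof cases
    case (2 zs)
    then have "successively (adjacent_in G X) zs"
      by (auto simp: adjacent_in_def elim!: successively_mono)
    with 2 show ?thesis using successively_imp_rtranclp by fastforce
  qed simp
next
  assume "(adjacent_in G X)\<^sup>*\<^sup>* v w"
  then show "connected_in G X v w"
  proof (induction rule: converse_rtranclp_induct)
    case (step v u)
    then consider "u = w" | zs where "zs \<noteq> []" "hd zs = u" "last zs = w" "set zs \<subseteq> X"
      "successively (adjacent G) zs"
      unfolding connected_in_def successively_conv_nth by blast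
    then have "\<exists>zs. zs \<noteq> [] \<and> hd zs = v \<and> last zs = w \<and> set zs \<subseteq> X \<and>
      successively (adjacent G) zs"
    proof cases
      case 1
      with step.hyps show ?thesis by (intro exI[of _ "[v, w]"]) (auto simp: adjacent_in_def)
    next
      case (2 zs)
      with step.hyps show ?thesis
        by (intro exI[of _ "v # zs"]) (auto simp: adjacent_in_def successively_Cons)
    qed
    then show ?case unfolding connected_in_def successively_conv_nth by blast
  qed (simp add: connected_in_def)
qed

definition collapsed_edge :: "'c ugraph \<Rightarrow> ('c \<Rightarrow> 'a) \<Rightarrow> 'c \<Rightarrow> 'c \<Rightarrow> bool" where
  "collapsed_edge G \<zeta> a b \<longleftrightarrow> a \<in> verts G \<and> b \<in> verts G \<and> adjacent G a b \<and> \<zeta> a = \<zeta> b"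

lemma Gamma_eq_rtranclp:
  assumes v: "v \<in> verts G"
  shows "Gamma G \<zeta> v = {w. (collapsed_edge G \<zeta>)\<^sup>*\<^sup>* v w}"
proof -
  let ?F = "{u \<in> verts G. \<zeta> u = \<zeta> v}"
  have to_collapsed: "(collapsed_edge G \<zeta>)\<^sup>*\<^sup>* v w" if "(adjacent_in G ?F)\<^sup>*\<^sup>* v w" for w
    using that by (rule rtranclp_mono[THEN predicate2D, rotated])
      (auto simp: adjacent_in_def collapsed_edge_def)
  have from_collapsed: "(adjacent_in G ?F)\<^sup>*\<^sup>* v w \<and> w \<in> ?F"
    if "(collapsed_edge G \<zeta>)\<^sup>*\<^sup>* v w" for w
    using that
  proof (induction rule: rtranclp_induct)
    case (step y z)
    then have "adjacent_in G ?F y z" by (auto simp: adjacent_in_def collapsed_edge_def)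
    with step show ?case by (auto simp: adjacent_in_def intro: rtranclp.rtrancl_into_rtrancl)
  qed (use v in simp)
  show ?thesis
    unfolding Gamma_def gamma_def connected_in_iff_rtranclp
    using to_collapsed from_collapsed by blast
qed

lemma Gamma_subset: "Gamma G \<zeta> v \<subseteq> {w \<in> verts G. \<zeta> w = \<zeta> v}"
  by (auto simp: Gamma_def gamma_def)

lemma Gamma_empty: "v \<notin> verts G \<Longrightarrow> Gamma G \<zeta> v = {}"
  by (force simp: Gamma_def gamma_def connected_in_def dest: hd_in_set)

lemma self_in_Gamma: "v \<in> verts G \<Longrightarrow> v \<in> Gamma G \<zeta> v"
  by (simp add: Gamma_eq_rtranclp)

lemma equivp_collapsed_edge_rtranclp: "equivp (collapsed_edge G \<zeta>)\<^sup>*\<^sup>*"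
  by (rule equivp_rtranclp) (auto simp: symp_def collapsed_edge_def adjacent_def insert_commute)

lemma Gamma_eq_if_mem:
  assumes w: "w \<in> Gamma G \<zeta> v"
  shows "Gamma G \<zeta> w = Gamma G \<zeta> v"
proof -
  have v: "v \<in> verts G" using w Gamma_empty by fastforce
  then have "w \<in> verts G" using w Gamma_subset by fastforce
  moreover have "(collapsed_edge G \<zeta>)\<^sup>*\<^sup>* v w" using w v by (simp add: Gamma_eq_rtranclp)
  ultimately show ?thesis
    using v equivp_collapsed_edge_rtranclp[of G \<zeta>]
    by (auto simp: Gamma_eq_rtranclp intro: equivp_transp dest: equivp_symp)
qed

lemma collapsed_edge_iff_mem_Gamma:
  "collapsed_edge G \<zeta> a b \<longleftrightarrow> a \<in> verts G \<and> b \<in> verts G \<and> adjacent G a b \<and> b \<in> Gamma G \<zeta> a"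
proof
  assume "collapsed_edge G \<zeta> a b"
  then show "a \<in> verts G \<and> b \<in> verts G \<and> adjacent G a b \<and> b \<in> Gamma G \<zeta> a"
    by (auto simp: Gamma_eq_rtranclp collapsed_edge_def)
next
  assume "a \<in> verts G \<and> b \<in> verts G \<and> adjacent G a b \<and> b \<in> Gamma G \<zeta> a"
  then show "collapsed_edge G \<zeta> a b"
    using Gamma_subset[of G \<zeta> a] by (auto simp: collapsed_edge_def)
qed

lemma Gamma_eq_iff_collapsed_edge_eq:
  "(\<forall>v\<in>verts G. Gamma G \<psi> v = Gamma G \<zeta> v) \<longleftrightarrow> collapsed_edge G \<psi> = collapsed_edge G \<zeta>"
proof
  assume "\<forall>v\<in>verts G. Gamma G \<psi> v = Gamma G \<zeta> v"
  then show "collapsed_edge G \<psi> = collapsed_edge G \<zeta>"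
    by (auto simp: fun_eq_iff collapsed_edge_iff_mem_Gamma)
qed (simp add: Gamma_eq_rtranclp)

section \<open>Strict homomorphisms and isomorphisms\<close>

lemma adjacent_iff_loopfree_edge: "adjacent G a b \<longleftrightarrow> a \<noteq> b \<and> {a, b} \<in> edges (loopfree G)"
  by (auto simp: adjacent_def loopfree_def)

lemma adjacent_imp_verts: "ugraph G \<Longrightarrow> adjacent G a b \<Longrightarrow> a \<in> verts G \<and> b \<in> verts G"
  unfolding ugraph_def adjacent_def by blast

lemma strict_hom_iff_no_collapsed_edge:
  assumes H: "ugraph H" and \<xi>: "\<xi> \<in> hom H X"
  shows "\<xi> \<in> strict_hom H X \<longleftrightarrow> (\<forall>a b. \<not> collapsed_edge H \<xi> a b)"
proof
  assume strict: "\<xi> \<in> strict_hom H X"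
  have "\<xi> a \<noteq> \<xi> b" if "adjacent H a b" for a b
  proof -
    have "\<xi> ` {a, b} \<in> edges (loopfree X)"
      using strict that by (auto simp: strict_hom_def hom_def adjacent_iff_loopfree_edge)
    then show ?thesis by (auto simp: loopfree_def)
  qed
  then show "\<forall>a b. \<not> collapsed_edge H \<xi> a b"
    by (auto simp: collapsed_edge_def)
next
  assume none: "\<forall>a b. \<not> collapsed_edge H \<xi> a b"
  have "\<xi> ` e \<in> edges (loopfree X)" if e: "e \<in> edges (loopfree H)" for e
  proof -
    obtain a b where ab: "e = {a, b}" "adjacent H a b"
      using e by (auto simp: loopfree_def card_2_iff adjacent_def)
    then have "\<xi> a \<noteq> \<xi> b" using none adjacent_imp_verts[OF H] by (auto simp: collapsed_edge_def)
    moreover have "\<xi> ` e \<in> edges X" using \<xi> e by (auto simp: hom_def loopfree_def)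
    ultimately show ?thesis using ab by (auto simp: loopfree_def)
  qed
  with \<xi> show "\<xi> \<in> strict_hom H X" by (auto simp: strict_hom_def hom_def loopfree_def)
qed

lemma finite_hom: "finite (verts G) \<Longrightarrow> finite (verts H) \<Longrightarrow> finite (hom G H)"
  unfolding hom_def by (rule finite_subset[OF _ finite_PiE]) auto

lemma finite_strict_hom: "finite (verts G) \<Longrightarrow> finite (verts H) \<Longrightarrow> finite (strict_hom G H)"
  unfolding strict_hom_def using finite_hom by blast

lemma hom_compose:
  assumes G: "\<forall>e\<in>edges G. e \<subseteq> verts G" and f: "f \<in> hom G H" and \<xi>: "\<xi> \<in> hom H X"
  shows "compose (verts G) \<xi> f \<in> hom G X"
proof -
  have "compose (verts G) \<xi> f ` e = \<xi> ` f ` e" if "e \<in> edges G" for e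
    using G that by (force simp: compose_eq)
  then show ?thesis
    using f \<xi> by (auto simp: hom_def compose_eq PiE_iff)
qed

lemma strict_hom_compose:
  assumes "ugraph G" "f \<in> strict_hom G H" "\<xi> \<in> strict_hom H X"
  shows "compose (verts G) \<xi> f \<in> strict_hom G X"
  using assms hom_compose[of G f H \<xi> X] hom_compose[of "loopfree G" f "loopfree H" \<xi> "loopfree X"]
  by (auto simp: strict_hom_def ugraph_def loopfree_def)

lemma inj_on_compose_surj:
  assumes "f ` A = B"
  shows "inj_on (\<lambda>\<xi>. compose A \<xi> f) (extensional B)"
proof (rule inj_onI)
  fix \<xi>\<^sub>1 \<xi>\<^sub>2
  assume ext: "\<xi>\<^sub>1 \<in> extensional B" "\<xi>\<^sub>2 \<in> extensional B"
    and eq: "compose A \<xi>\<^sub>1 f = compose A \<xi>\<^sub>2 f"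
  have "\<xi>\<^sub>1 (f x) = \<xi>\<^sub>2 (f x)" if "x \<in> A" for x
    using fun_cong[OF eq, of x] that by (simp add: compose_eq)
  with ext assms show "\<xi>\<^sub>1 = \<xi>\<^sub>2" by (auto intro: extensionalityI)
qed

lemma iso_sym:
  assumes G: "ugraph G" and "iso G H"
  shows "iso H G"
proof -
  obtain f where f: "bij_betw f (verts G) (verts H)" "(\<lambda>e. f ` e) ` edges G = edges H"
    using \<open>iso G H\<close> by (auto simp: iso_def)
  have "inv_into (verts G) f ` f ` e = e" if "e \<in> edges G" for e
    using f(1) G that by (auto simp: ugraph_def bij_betw_def inv_into_image_cancel)
  then have "(\<lambda>e. inv_into (verts G) f ` e) ` edges H = edges G"
    unfolding f(2)[symmetric] image_image by simp
  with bij_betw_inv_into[OF f(1)] show ?thesis by (auto simp: iso_def)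
qed

lemma card_strict_hom_le_if_iso:
  assumes G: "ugraph G" and iso: "iso G H" and X: "finite (verts X)"
  shows "card (strict_hom H X) \<le> card (strict_hom G X)"
proof -
  obtain f where f: "bij_betw f (verts G) (verts H)" "(\<lambda>e. f ` e) ` edges G = edges H"
    using iso by (auto simp: iso_def)
  have "restrict f (verts G) \<in> strict_hom G H"
  proof -
    have "restrict f (verts G) ` e = f ` e" "card (f ` e) = card e" if "e \<in> edges G" for e
      using that G f(1) by (auto simp: ugraph_def bij_betw_def card_image inj_on_subset)
    then show ?thesis
      using f by (force simp: strict_hom_def hom_def loopfree_def bij_betw_def)
  qed
  then have "(\<lambda>\<xi>. compose (verts G) \<xi> (restrict f (verts G))) ` strict_hom H X \<subseteq> strict_hom G X"
    using strict_hom_compose[OF G] by blast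
  moreover have "inj_on (\<lambda>\<xi>. compose (verts G) \<xi> (restrict f (verts G))) (strict_hom H X)"
  proof (rule inj_on_subset)
    show "inj_on (\<lambda>\<xi>. compose (verts G) \<xi> (restrict f (verts G))) (extensional (verts H))"
      by (rule inj_on_compose_surj) (use f(1) in \<open>auto simp: bij_betw_def\<close>)
  qed (auto simp: strict_hom_def hom_def PiE_iff)
  moreover have "finite (strict_hom G X)" using G X by (simp add: finite_strict_hom ugraph_def)
  ultimately show ?thesis by (meson card_inj_on_le)
qed

lemma card_strict_hom_iso:
  "ugraph G \<Longrightarrow> ugraph H \<Longrightarrow> iso G H \<Longrightarrow> finite (verts X) \<Longrightarrow>
    card (strict_hom G X) = card (strict_hom H X)"
  by (meson card_strict_hom_le_if_iso iso_sym le_antisym)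

section \<open>Odd cycles\<close>

definition closed_walk :: "('a \<Rightarrow> 'a \<Rightarrow> bool) \<Rightarrow> nat \<Rightarrow> (nat \<Rightarrow> 'a) \<Rightarrow> bool" where
  "closed_walk E k w \<longleftrightarrow> (\<forall>i<k. E (w i) (w (Suc i mod k)))"

lemma has_odd_cycle_iff_closed_walk:
  "has_odd_cycle G \<longleftrightarrow> (\<exists>k vs. odd k \<and> 3 \<le> k \<and> inj_on vs {..<k} \<and>
     closed_walk (\<lambda>a b. a \<in> verts G \<and> {a, b} \<in> edges G) k vs)"
  by (simp add: has_odd_cycle_def closed_walk_def)

lemma closed_walk_split:
  assumes w: "closed_walk E k w" and ij: "i < j" "j < k" "w i = w j"
  shows "closed_walk E (j - i) (\<lambda>t. w (i + t))"
    and "closed_walk E (k - (j - i)) (\<lambda>t. w ((j + t) mod k))"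
proof -
  have step: "E (w m) (w (Suc m mod k))" if "m < k" for m
    using w that by (simp add: closed_walk_def)
  show "closed_walk E (j - i) (\<lambda>t. w (i + t))"
    unfolding closed_walk_def
  proof (intro allI impI)
    fix t assume t: "t < j - i"
    show "E (w (i + t)) (w (i + Suc t mod (j - i)))"
    proof (cases "Suc t < j - i")
      case True
      then show ?thesis using step[of "i + t"] ij by simp
    next
      case False
      then have "Suc t = j - i" using t by simp
      then have "Suc (i + t) = j" "Suc t mod (j - i) = 0" using ij by simp_all
      then show ?thesis using step[of "i + t"] ij by simp
    qed
  qed
  show "closed_walk E (k - (j - i)) (\<lambda>t. w ((j + t) mod k))"
    unfolding closed_walk_def
  proof (intro allI impI)
    fix t assume t: "t < k - (j - i)"
    have s: "E (w ((j + t) mod k)) (w (Suc (j + t) mod k))"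
      using step[of "(j + t) mod k"] ij by (simp add: mod_Suc_eq)
    show "E (w ((j + t) mod k)) (w ((j + Suc t mod (k - (j - i))) mod k))"
    proof (cases "Suc t < k - (j - i)")
      case True
      then show ?thesis using s by simp
    next
      case False
      then have "Suc t = k - (j - i)" using t by simp
      then have wrap: "Suc t mod (k - (j - i)) = 0" and "Suc (j + t) = k + i" using ij by simp_all
      then have "Suc (j + t) mod k = i" using ij by simp
      then show ?thesis using s ij wrap by simp
    qed
  qed
qed

text \<open>A repeated vertex splits the walk into two shorter closed walks, one of them odd.\<close>
lemma odd_closed_walk_imp_odd_cycle:
  assumes irrefl: "\<And>a. \<not> E a a"
  shows "odd k \<Longrightarrow> closed_walk E k w \<Longrightarrow>
    \<exists>k' vs. odd k' \<and> 3 \<le> k' \<and> inj_on vs {..<k'} \<and> closed_walk E k' vs"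
proof (induction k arbitrary: w rule: less_induct)
  case (less k)
  show ?case
  proof (cases "inj_on w {..<k}")
    case True
    have "k \<noteq> 1"
    proof
      assume "k = 1"
      then have "E (w 0) (w 0)" using less.prems(2) by (simp add: closed_walk_def)
      with irrefl show False by blast
    qed
    then have "3 \<le> k" using less.prems(1) by presburger
    then show ?thesis using True less.prems(1,2) by (intro exI conjI)
  next
    case False
    then obtain a b where ab: "a < k" "b < k" "a \<noteq> b" "w a = w b"
      by (auto simp: inj_on_def)
    define i j where "i = min a b" and "j = max a b"
    have ij: "i < j" "j < k" "w i = w j"
      using ab by (auto simp: i_def j_def min_def max_def)
    have "odd ((j - i) + (k - (j - i)))" using ij less.prems(1) by simp
    then consider "odd (j - i)" | "odd (k - (j - i))" by auto
    then show ?thesis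
    proof cases
      case 1
      have "j - i < k" using ij by simp
      from less.IH[OF this 1 closed_walk_split(1)[OF less.prems(2) ij]] show ?thesis .
    next
      case 2
      have "k - (j - i) < k" using ij by simp
      from less.IH[OF this 2 closed_walk_split(2)[OF less.prems(2) ij]] show ?thesis .
    qed
  qed
qed

lemma has_odd_cycle_if_strict_hom:
  assumes \<zeta>: "\<zeta> \<in> strict_hom Q R" and odd: "has_odd_cycle (loopfree Q)"
  shows "has_odd_cycle (loopfree R)"
proof -
  let ?E = "\<lambda>G a b. a \<in> verts (loopfree G) \<and> {a, b} \<in> edges (loopfree G)"
  obtain k vs where k: "odd k" "closed_walk (?E Q) k vs"
    using odd unfolding has_odd_cycle_iff_closed_walk by blast
  have edge_map: "?E R (\<zeta> a) (\<zeta> b)" if ab: "?E Q a b" for a b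
  proof
    show "\<zeta> a \<in> verts (loopfree R)"
      using \<zeta> ab by (auto simp: strict_hom_def hom_def loopfree_def)
    have "\<zeta> ` {a, b} \<in> edges (loopfree R)"
      using \<zeta> ab unfolding strict_hom_def hom_def by blast
    then show "{\<zeta> a, \<zeta> b} \<in> edges (loopfree R)" by simp
  qed
  have walk: "closed_walk (?E R) k (\<zeta> \<circ> vs)"
    unfolding closed_walk_def comp_apply
  proof (intro allI impI)
    fix i assume "i < k"
    with k(2) have "?E Q (vs i) (vs (Suc i mod k))" unfolding closed_walk_def by blast
    then show "?E R (\<zeta> (vs i)) (\<zeta> (vs (Suc i mod k)))" by (rule edge_map)
  qed
  have irrefl: "\<not> ?E R a a" for a by (simp add: loopfree_def)
  from odd_closed_walk_imp_odd_cycle[of "?E R", OF irrefl k(1) walk] show ?thesis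
    by (simp add: has_odd_cycle_iff_closed_walk)
qed

lemma in_Co_if_strict_hom: "ugraph Q \<Longrightarrow> in_Co R \<Longrightarrow> \<zeta> \<in> strict_hom Q R \<Longrightarrow> in_Co Q"
  using has_odd_cycle_if_strict_hom by (auto simp: in_Co_def)

section \<open>Contracting the classes \<open>Gamma\<close>\<close>

text \<open>The representative of \<open>Gamma G \<zeta> u\<close> is a vertex of \<open>G\<close> and depends only on the class,
  so the quotient has the vertex type of \<open>G\<close> and is determined by the collapsed edges.\<close>
definition Gamma_rep :: "'c ugraph \<Rightarrow> ('c \<Rightarrow> 'a) \<Rightarrow> 'c \<Rightarrow> 'c" where
  "Gamma_rep G \<zeta> = (\<lambda>u\<in>verts G. SOME w. w \<in> Gamma G \<zeta> u)"

definition Gamma_quotient :: "'c ugraph \<Rightarrow> ('c \<Rightarrow> 'a) \<Rightarrow> 'c ugraph" where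
  "Gamma_quotient G \<zeta> =
     \<lparr>verts = Gamma_rep G \<zeta> ` verts G, edges = (\<lambda>e. Gamma_rep G \<zeta> ` e) ` edges G\<rparr>"

lemma Gamma_rep_in_Gamma: "u \<in> verts G \<Longrightarrow> Gamma_rep G \<zeta> u \<in> Gamma G \<zeta> u"
  unfolding Gamma_rep_def using someI[of "\<lambda>w. w \<in> Gamma G \<zeta> u", OF self_in_Gamma] by simp

lemma Gamma_rep_mem_fiber: "u \<in> verts G \<Longrightarrow> Gamma_rep G \<zeta> u \<in> verts G \<and> \<zeta> (Gamma_rep G \<zeta> u) = \<zeta> u"
  using Gamma_rep_in_Gamma[of u G \<zeta>] Gamma_subset[of G \<zeta> u] by blast

lemma Gamma_rep_eq_iff:
  assumes "u \<in> verts G" "w \<in> verts G"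
  shows "Gamma_rep G \<zeta> w = Gamma_rep G \<zeta> u \<longleftrightarrow> w \<in> Gamma G \<zeta> u"
proof
  assume eq: "Gamma_rep G \<zeta> w = Gamma_rep G \<zeta> u"
  have "Gamma G \<zeta> w = Gamma G \<zeta> (Gamma_rep G \<zeta> w)"
    by (rule Gamma_eq_if_mem[OF Gamma_rep_in_Gamma[OF assms(2)], symmetric])
  also have "\<dots> = Gamma G \<zeta> u"
    unfolding eq by (rule Gamma_eq_if_mem[OF Gamma_rep_in_Gamma[OF assms(1)]])
  finally have "Gamma G \<zeta> w = Gamma G \<zeta> u" .
  then show "w \<in> Gamma G \<zeta> u" using self_in_Gamma[OF assms(2), of \<zeta>] by simp
next
  assume "w \<in> Gamma G \<zeta> u"
  then have "Gamma G \<zeta> w = Gamma G \<zeta> u" by (rule Gamma_eq_if_mem)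
  then show "Gamma_rep G \<zeta> w = Gamma_rep G \<zeta> u"
    using assms by (simp add: Gamma_rep_def)
qed

lemma Gamma_rep_cong:
  "collapsed_edge G \<psi> = collapsed_edge G \<zeta> \<Longrightarrow> Gamma_rep G \<psi> = Gamma_rep G \<zeta>"
  using Gamma_eq_iff_collapsed_edge_eq[of G \<psi> \<zeta>] by (simp add: Gamma_rep_def cong: restrict_cong)

lemma ugraph_Gamma_quotient:
  assumes G: "ugraph G"
  shows "ugraph (Gamma_quotient G \<zeta>)"
  unfolding ugraph_def
proof (intro conjI ballI)
  show "finite (verts (Gamma_quotient G \<zeta>))" "verts (Gamma_quotient G \<zeta>) \<noteq> {}"
    using G by (simp_all add: Gamma_quotient_def ugraph_def)
next
  fix e' assume "e' \<in> edges (Gamma_quotient G \<zeta>)"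
  then obtain e where e: "e \<in> edges G" "e' = Gamma_rep G \<zeta> ` e"
    by (auto simp: Gamma_quotient_def)
  have card_e: "card e = 1 \<or> card e = 2" and "e \<subseteq> verts G"
    using G e(1) by (auto simp: ugraph_def)
  then show "e' \<subseteq> verts (Gamma_quotient G \<zeta>)"
    using e(2) by (auto simp: Gamma_quotient_def)
  have "finite e" "e \<noteq> {}" using card_e by (auto intro: card_ge_0_finite)
  then have "1 \<le> card e'" "card e' \<le> card e"
    using e(2) by (auto simp: Suc_le_eq card_image_le)
  then show "card e' = 1 \<or> card e' = 2" using card_e by linarith
qed

lemma Gamma_rep_hom: "ugraph G \<Longrightarrow> Gamma_rep G \<zeta> \<in> hom G (Gamma_quotient G \<zeta>)"
  by (auto simp: hom_def Gamma_quotient_def Gamma_rep_def ugraph_def)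

lemma ugraph_edge_eq_pair:
  assumes G: "ugraph G" and e: "e \<in> edges G" and uw: "u \<in> e" "w \<in> e" "u \<noteq> w"
  shows "e = {u, w}"
proof -
  have "finite e" "card e \<le> 2"
    using G e by (auto simp: ugraph_def intro: card_ge_0_finite)
  moreover have "{u, w} \<subseteq> e" "card {u, w} = 2" using uw by auto
  ultimately show ?thesis by (metis card_seteq)
qed

definition Gamma_factor :: "'c ugraph \<Rightarrow> ('c \<Rightarrow> 'a) \<Rightarrow> 'c \<Rightarrow> 'a" where
  "Gamma_factor G \<zeta> = restrict \<zeta> (verts (Gamma_quotient G \<zeta>))"

definition Gamma_lift :: "'c ugraph \<Rightarrow> ('c \<Rightarrow> 'a) \<Rightarrow> ('c \<Rightarrow> 'b) \<Rightarrow> 'c \<Rightarrow> 'b" where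
  "Gamma_lift G \<zeta> \<xi> = compose (verts G) \<xi> (Gamma_rep G \<zeta>)"

lemma Gamma_factor_rep: "u \<in> verts G \<Longrightarrow> Gamma_factor G \<zeta> (Gamma_rep G \<zeta> u) = \<zeta> u"
  using Gamma_rep_mem_fiber[of u G \<zeta>] by (simp add: Gamma_factor_def Gamma_quotient_def)

lemma Gamma_lift_factor: "\<zeta> \<in> hom G R \<Longrightarrow> Gamma_lift G \<zeta> (Gamma_factor G \<zeta>) = \<zeta>"
  by (rule extensionalityI[of _ "verts G"])
    (auto simp: Gamma_lift_def compose_eq Gamma_factor_rep hom_def PiE_iff)

lemma Gamma_factor_hom:
  assumes G: "ugraph G" and \<zeta>: "\<zeta> \<in> hom G R"
  shows "Gamma_factor G \<zeta> \<in> hom (Gamma_quotient G \<zeta>) R"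
  unfolding hom_def
proof (intro CollectI conjI ballI PiE_I)
  fix x assume "x \<in> verts (Gamma_quotient G \<zeta>)"
  then obtain u where u: "u \<in> verts G" "x = Gamma_rep G \<zeta> u"
    by (auto simp: Gamma_quotient_def)
  then show "Gamma_factor G \<zeta> x \<in> verts R"
    using \<zeta> by (auto simp: Gamma_factor_rep hom_def)
next
  fix e' assume "e' \<in> edges (Gamma_quotient G \<zeta>)"
  then obtain e where e: "e \<in> edges G" "e' = Gamma_rep G \<zeta> ` e"
    by (auto simp: Gamma_quotient_def)
  have "e \<subseteq> verts G" using G e(1) by (auto simp: ugraph_def)
  then have "Gamma_factor G \<zeta> ` e' = \<zeta> ` e"
    unfolding e(2) image_image by (intro image_cong refl Gamma_factor_rep) blast
  then show "Gamma_factor G \<zeta> ` e' \<in> edges R" using \<zeta> e(1) by (auto simp: hom_def)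
qed (simp add: Gamma_factor_def)

lemma Gamma_factor_strict_hom:
  assumes G: "ugraph G" and \<zeta>: "\<zeta> \<in> hom G R"
  shows "Gamma_factor G \<zeta> \<in> strict_hom (Gamma_quotient G \<zeta>) R"
proof -
  let ?r = "Gamma_rep G \<zeta>"
  have "\<not> collapsed_edge (Gamma_quotient G \<zeta>) (Gamma_factor G \<zeta>) a b" for a b
  proof
    assume ab: "collapsed_edge (Gamma_quotient G \<zeta>) (Gamma_factor G \<zeta>) a b"
    then obtain e where e: "e \<in> edges G" "{a, b} = ?r ` e" "a \<noteq> b"
      by (auto simp: collapsed_edge_def adjacent_def Gamma_quotient_def)
    have "a \<in> ?r ` e" "b \<in> ?r ` e" unfolding e(2)[symmetric] by simp_all
    then obtain u w where uw: "u \<in> e" "w \<in> e" "?r u = a" "?r w = b" by blast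
    have verts: "u \<in> verts G" "w \<in> verts G" using G e(1) uw by (auto simp: ugraph_def)
    have "Gamma_factor G \<zeta> a = Gamma_factor G \<zeta> b" using ab unfolding collapsed_edge_def by blast
    then have "\<zeta> u = \<zeta> w"
      unfolding uw(3,4)[symmetric] Gamma_factor_rep[OF verts(1)] Gamma_factor_rep[OF verts(2)] .
    moreover have "adjacent G u w"
      using ugraph_edge_eq_pair[OF G e(1) uw(1,2)] uw e by (auto simp: adjacent_def)
    ultimately have "collapsed_edge G \<zeta> u w" using verts by (simp add: collapsed_edge_def)
    then have "w \<in> Gamma G \<zeta> u" by (simp add: collapsed_edge_iff_mem_Gamma)
    then have "?r w = ?r u" using Gamma_rep_eq_iff[OF verts] by blast
    then show False using uw(3,4) e(3) by simp
  qed
  with strict_hom_iff_no_collapsed_edge[OF ugraph_Gamma_quotient[OF G] Gamma_factor_hom[OF G \<zeta>]]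
  show ?thesis by blast
qed

lemma Gamma_lift_hom:
  assumes G: "ugraph G" and \<xi>: "\<xi> \<in> hom (Gamma_quotient G \<zeta>) S"
  shows "Gamma_lift G \<zeta> \<xi> \<in> hom G S"
  unfolding Gamma_lift_def
  by (rule hom_compose[OF _ Gamma_rep_hom[OF G] \<xi>]) (use G in \<open>simp add: ugraph_def\<close>)

lemma inj_on_Gamma_lift: "inj_on (Gamma_lift G \<zeta>) (hom (Gamma_quotient G \<zeta>) S)"
proof (rule inj_on_subset)
  show "inj_on (Gamma_lift G \<zeta>) (extensional (verts (Gamma_quotient G \<zeta>)))"
    unfolding Gamma_lift_def by (rule inj_on_compose_surj) (simp add: Gamma_quotient_def)
qed (auto simp: hom_def PiE_iff)

lemma Gamma_lift_collapsed_edge: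
  assumes G: "ugraph G" and \<xi>: "\<xi> \<in> strict_hom (Gamma_quotient G \<zeta>) S"
  shows "collapsed_edge G (Gamma_lift G \<zeta> \<xi>) = collapsed_edge G \<zeta>"
proof (intro ext)
  fix a b
  let ?Q = "Gamma_quotient G \<zeta>" and ?r = "Gamma_rep G \<zeta>"
  have "\<xi> \<in> hom ?Q S" using \<xi> by (simp add: strict_hom_def)
  then have no_collapse: "\<not> collapsed_edge ?Q \<xi> x y" for x y
    using \<xi> strict_hom_iff_no_collapsed_edge[OF ugraph_Gamma_quotient[OF G]] by blast
  have same_values: "\<xi> (?r a) = \<xi> (?r b) \<longleftrightarrow> \<zeta> a = \<zeta> b"
    if ab: "a \<in> verts G" "b \<in> verts G" "adjacent G a b"
  proof -
    have "\<xi> (?r a) = \<xi> (?r b) \<longleftrightarrow> ?r a = ?r b"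
    proof
      assume eq: "\<xi> (?r a) = \<xi> (?r b)"
      show "?r a = ?r b"
      proof (rule ccontr)
        assume ne: "?r a \<noteq> ?r b"
        have "{?r a, ?r b} \<in> edges ?Q"
          using imageI[of "{a, b}" "edges G" "\<lambda>e. ?r ` e"] ab(3)
          by (simp add: Gamma_quotient_def adjacent_def)
        with ne eq ab have "collapsed_edge ?Q \<xi> (?r a) (?r b)"
          by (simp add: collapsed_edge_def adjacent_def Gamma_quotient_def)
        with no_collapse show False by blast
      qed
    qed simp
    also have "\<dots> \<longleftrightarrow> b \<in> Gamma G \<zeta> a"
      using Gamma_rep_eq_iff[OF ab(1,2)] by (rule eq_commute[THEN trans])
    also have "\<dots> \<longleftrightarrow> \<zeta> a = \<zeta> b"
      using collapsed_edge_iff_mem_Gamma[of G \<zeta> a b] ab by (simp add: collapsed_edge_def)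
    finally show ?thesis .
  qed
  show "collapsed_edge G (Gamma_lift G \<zeta> \<xi>) a b = collapsed_edge G \<zeta> a b"
  proof (cases "a \<in> verts G \<and> b \<in> verts G \<and> adjacent G a b")
    case True
    then show ?thesis using same_values by (simp add: collapsed_edge_def Gamma_lift_def compose_eq)
  qed (auto simp: collapsed_edge_def)
qed

text \<open>The lift depends on \<open>\<zeta>\<close> only through the collapsed edges of \<open>\<zeta>\<close>, and these are
  recovered from \<open>\<rho> \<zeta>\<close>; so \<open>\<rho> \<zeta>\<^sub>1 = \<rho> \<zeta>\<^sub>2\<close> forces equal quotients and then equal factors.\<close>
lemma exists_Gamma_preserving_inj_if_strict_inj:
  fixes G :: "'c ugraph" and \<iota> :: "'c ugraph \<Rightarrow> ('c \<Rightarrow> 'a) \<Rightarrow> 'c \<Rightarrow> 'b"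
  assumes G: "ugraph G"
    and \<iota>: "\<And>Q. ugraph Q \<Longrightarrow> inj_on (\<iota> Q) (strict_hom Q R) \<and> \<iota> Q ` strict_hom Q R \<subseteq> strict_hom Q S"
  shows "\<exists>\<rho>. inj_on \<rho> (hom G R) \<and> \<rho> ` hom G R \<subseteq> hom G S \<and>
    (\<forall>\<zeta>\<in>hom G R. \<forall>v\<in>verts G. Gamma G (\<rho> \<zeta>) v = Gamma G \<zeta> v)"
proof -
  let ?Q = "Gamma_quotient G"
  define \<rho> where "\<rho> \<zeta> = Gamma_lift G \<zeta> (\<iota> (?Q \<zeta>) (Gamma_factor G \<zeta>))" for \<zeta>
  have \<iota>_factor: "\<iota> (?Q \<zeta>) (Gamma_factor G \<zeta>) \<in> strict_hom (?Q \<zeta>) S" if "\<zeta> \<in> hom G R" for \<zeta>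
    using \<iota>[OF ugraph_Gamma_quotient[OF G]] Gamma_factor_strict_hom[OF G that] by blast
  have collapsed: "collapsed_edge G (\<rho> \<zeta>) = collapsed_edge G \<zeta>" if "\<zeta> \<in> hom G R" for \<zeta>
    unfolding \<rho>_def by (rule Gamma_lift_collapsed_edge[OF G \<iota>_factor[OF that]])
  have "\<rho> ` hom G R \<subseteq> hom G S"
    using Gamma_lift_hom[OF G] \<iota>_factor by (auto simp: \<rho>_def strict_hom_def)
  moreover have "inj_on \<rho> (hom G R)"
  proof (rule inj_onI)
    fix \<zeta>\<^sub>1 \<zeta>\<^sub>2 assume \<zeta>: "\<zeta>\<^sub>1 \<in> hom G R" "\<zeta>\<^sub>2 \<in> hom G R" and eq: "\<rho> \<zeta>\<^sub>1 = \<rho> \<zeta>\<^sub>2"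
    then have "collapsed_edge G \<zeta>\<^sub>1 = collapsed_edge G \<zeta>\<^sub>2"
      using collapsed[OF \<zeta>(1)] collapsed[OF \<zeta>(2)] by simp
    then have rep: "Gamma_rep G \<zeta>\<^sub>1 = Gamma_rep G \<zeta>\<^sub>2" by (rule Gamma_rep_cong)
    then have Q: "?Q \<zeta>\<^sub>2 = ?Q \<zeta>\<^sub>1" and lift: "Gamma_lift G \<zeta>\<^sub>2 = Gamma_lift G \<zeta>\<^sub>1"
      by (simp_all add: Gamma_quotient_def Gamma_lift_def[abs_def])
    have factor: "Gamma_factor G \<zeta>\<^sub>1 \<in> strict_hom (?Q \<zeta>\<^sub>1) R"
        "Gamma_factor G \<zeta>\<^sub>2 \<in> strict_hom (?Q \<zeta>\<^sub>1) R"
      using Gamma_factor_strict_hom[OF G \<zeta>(1)] Gamma_factor_strict_hom[OF G \<zeta>(2)] unfolding Q .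
    have "\<iota> (?Q \<zeta>\<^sub>1) (Gamma_factor G \<zeta>\<^sub>1) \<in> hom (?Q \<zeta>\<^sub>1) S"
        "\<iota> (?Q \<zeta>\<^sub>1) (Gamma_factor G \<zeta>\<^sub>2) \<in> hom (?Q \<zeta>\<^sub>1) S"
      using \<iota>_factor[OF \<zeta>(1)] \<iota>_factor[OF \<zeta>(2)] unfolding Q by (simp_all add: strict_hom_def)
    moreover have "Gamma_lift G \<zeta>\<^sub>1 (\<iota> (?Q \<zeta>\<^sub>1) (Gamma_factor G \<zeta>\<^sub>1)) =
        Gamma_lift G \<zeta>\<^sub>1 (\<iota> (?Q \<zeta>\<^sub>1) (Gamma_factor G \<zeta>\<^sub>2))"
      using eq unfolding \<rho>_def Q lift .
    ultimately have "\<iota> (?Q \<zeta>\<^sub>1) (Gamma_factor G \<zeta>\<^sub>1) = \<iota> (?Q \<zeta>\<^sub>1) (Gamma_factor G \<zeta>\<^sub>2)"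
      using inj_onD[OF inj_on_Gamma_lift] by blast
    then have factor_eq: "Gamma_factor G \<zeta>\<^sub>1 = Gamma_factor G \<zeta>\<^sub>2"
      using inj_onD[OF conjunct1[OF \<iota>[OF ugraph_Gamma_quotient[OF G]]] _ factor] by blast
    have "\<zeta>\<^sub>1 = Gamma_lift G \<zeta>\<^sub>1 (Gamma_factor G \<zeta>\<^sub>1)" by (rule Gamma_lift_factor[OF \<zeta>(1), symmetric])
    also have "\<dots> = Gamma_lift G \<zeta>\<^sub>2 (Gamma_factor G \<zeta>\<^sub>2)" unfolding factor_eq lift ..
    also have "\<dots> = \<zeta>\<^sub>2" by (rule Gamma_lift_factor[OF \<zeta>(2)])
    finally show "\<zeta>\<^sub>1 = \<zeta>\<^sub>2" .
  qed
  moreover have "Gamma G (\<rho> \<zeta>) v = Gamma G \<zeta> v" if "\<zeta> \<in> hom G R" "v \<in> verts G" for \<zeta> v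
    using Gamma_eq_iff_collapsed_edge_eq[of G "\<rho> \<zeta>" \<zeta>] collapsed[OF that(1)] that(2) by blast
  ultimately show ?thesis by (intro exI[of _ \<rho>] conjI ballI)
qed

lemma exists_Gamma_preserving_inj:
  fixes G :: "'c ugraph" and R :: "'a ugraph" and S :: "'b ugraph"
  assumes G: "ugraph G" and R: "finite (verts R)" and S: "finite (verts S)"
    and le: "\<And>Q :: 'c ugraph. ugraph Q \<Longrightarrow> card (strict_hom Q R) \<le> card (strict_hom Q S)"
  shows "\<exists>\<rho>. inj_on \<rho> (hom G R) \<and> \<rho> ` hom G R \<subseteq> hom G S \<and>
    (\<forall>\<zeta>\<in>hom G R. \<forall>v\<in>verts G. Gamma G (\<rho> \<zeta>) v = Gamma G \<zeta> v)"
proof -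
  have "\<exists>\<iota>. \<forall>Q :: 'c ugraph. ugraph Q \<longrightarrow>
      inj_on (\<iota> Q) (strict_hom Q R) \<and> \<iota> Q ` strict_hom Q R \<subseteq> strict_hom Q S"
  proof (rule choice, rule allI)
    fix Q :: "'c ugraph"
    show "\<exists>\<iota>. ugraph Q \<longrightarrow> inj_on \<iota> (strict_hom Q R) \<and> \<iota> ` strict_hom Q R \<subseteq> strict_hom Q S"
    proof (cases "ugraph Q")
      case True
      then have "finite (strict_hom Q R)" "finite (strict_hom Q S)"
        using R S by (simp_all add: finite_strict_hom ugraph_def)
      from card_le_inj[OF this le[OF True]] show ?thesis by blast
    qed simp
  qed
  then obtain \<iota> where "\<forall>Q :: 'c ugraph. ugraph Q \<longrightarrow>
      inj_on (\<iota> Q) (strict_hom Q R) \<and> \<iota> Q ` strict_hom Q R \<subseteq> strict_hom Q S"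
    by blast
  from exists_Gamma_preserving_inj_if_strict_inj[OF G this[rule_format]] show ?thesis .
qed

section \<open>Comparing numbers of homomorphisms\<close>

lemma card_strict_hom_le_if_Gamma_preserving_inj:
  assumes H: "ugraph H" and S: "finite (verts S)"
    and \<rho>: "inj_on \<rho> (hom H R)" "\<rho> ` hom H R \<subseteq> hom H S"
      "\<forall>\<zeta>\<in>hom H R. \<forall>v\<in>verts H. Gamma H (\<rho> \<zeta>) v = Gamma H \<zeta> v"
  shows "card (strict_hom H R) \<le> card (strict_hom H S)"
proof (rule card_inj_on_le)
  show "inj_on \<rho> (strict_hom H R)"
    using \<rho>(1) by (rule inj_on_subset) (simp add: strict_hom_def)
  show "finite (strict_hom H S)" using H S by (simp add: finite_strict_hom ugraph_def)
  show "\<rho> ` strict_hom H R \<subseteq> strict_hom H S"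
  proof clarify
    fix \<zeta> assume \<zeta>: "\<zeta> \<in> strict_hom H R"
    then have hom: "\<zeta> \<in> hom H R" "\<rho> \<zeta> \<in> hom H S" using \<rho>(2) by (auto simp: strict_hom_def)
    then have "collapsed_edge H (\<rho> \<zeta>) = collapsed_edge H \<zeta>"
      using \<rho>(3) Gamma_eq_iff_collapsed_edge_eq by blast
    then show "\<rho> \<zeta> \<in> strict_hom H S"
      using \<zeta> strict_hom_iff_no_collapsed_edge[OF H hom(1)] strict_hom_iff_no_collapsed_edge[OF H hom(2)]
      by simp
  qed
qed

lemma card_strict_hom_le_if_sqsub_Gamma:
  fixes R :: "'a ugraph" and S :: "'b ugraph" and Ur :: "'c ugraph set"
  assumes sq: "sqsub_Gamma Ur R S" and rep: "rep_system U' Ur" and U': "U' \<subseteq> {G. ugraph G}"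
    and R: "finite (verts R)" and S: "finite (verts S)" and G: "G \<in> U'"
  shows "card (strict_hom G R) \<le> card (strict_hom G S)"
proof -
  obtain H where H: "H \<in> Ur" "iso G H" using rep G by (auto simp: rep_system_def)
  have ugraph: "ugraph G" "ugraph H" using G H(1) rep U' by (auto simp: rep_system_def)
  have "card (strict_hom G R) = card (strict_hom H R)"
    using card_strict_hom_iso[OF ugraph H(2) R] .
  also have "\<dots> \<le> card (strict_hom H S)"
  proof -
    obtain \<rho> :: "'c ugraph \<Rightarrow> ('c \<Rightarrow> 'a) \<Rightarrow> 'c \<Rightarrow> 'b" where "\<forall>G\<in>Ur.
        inj_on (\<rho> G) (hom G R) \<and> \<rho> G ` hom G R \<subseteq> hom G S \<and>
        (\<forall>\<zeta>\<in>hom G R. \<forall>v\<in>verts G. Gamma G (\<rho> G \<zeta>) v = Gamma G \<zeta> v)"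
      using sq by (auto simp: sqsub_Gamma_def)
    with H(1) show ?thesis by (intro card_strict_hom_le_if_Gamma_preserving_inj[OF ugraph(2) S]) auto
  qed
  also have "\<dots> = card (strict_hom G S)"
    using card_strict_hom_iso[OF ugraph H(2) S] by simp
  finally show ?thesis .
qed

lemma card_strict_hom_le_all:
  fixes R :: "'a ugraph" and S :: "'b ugraph" and U' :: "'c ugraph set" and Q :: "'c ugraph"
  assumes cls: "U' = {G. ugraph G} \<or> (in_Co R \<and> {G. in_Co G} \<subseteq> U')"
    and le: "\<forall>G\<in>U'. card (strict_hom G R) \<le> card (strict_hom G S)" and Q: "ugraph Q"
  shows "card (strict_hom Q R) \<le> card (strict_hom Q S)"
proof (cases "strict_hom Q R = {}")
  case False
  then have "Q \<in> U'" using cls Q in_Co_if_strict_hom by blast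
  with le show ?thesis by blast
qed simp

theorem theorem4:
  fixes R :: "'a ugraph" and S :: "'b ugraph"
    and U' Ur :: "nat ugraph set"
  assumes R: "ugraph R"
    and U'_sub: "U' \<subseteq> {G. ugraph G}"
    and cls: "U' = {G. ugraph G} \<or> (in_Co R \<and> {G. in_Co G} \<subseteq> U')"
    and rep: "rep_system U' Ur"
    and S: "ugraph S"
  shows "(sqsub_Gamma Ur R S \<longleftrightarrow>
           (\<forall>G\<in>U'. card (strict_hom G R) \<le> card (strict_hom G S)))
       \<and> ((\<forall>G\<in>U'. card (strict_hom G R) \<le> card (strict_hom G S)) \<longrightarrow>
           (\<forall>G\<in>U'. card (hom G R) \<le> card (hom G S)))"
proof -
  let ?le = "\<forall>G\<in>U'. card (strict_hom G R) \<le> card (strict_hom G S)"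
  have fin: "finite (verts R)" "finite (verts S)" using R S by (simp_all add: ugraph_def)
  have Gamma_inj: "\<exists>\<rho>. inj_on \<rho> (hom G R) \<and> \<rho> ` hom G R \<subseteq> hom G S \<and>
      (\<forall>\<zeta>\<in>hom G R. \<forall>v\<in>verts G. Gamma G (\<rho> \<zeta>) v = Gamma G \<zeta> v)"
    if ?le and "ugraph G" for G :: "nat ugraph"
    using exists_Gamma_preserving_inj[OF that(2) fin card_strict_hom_le_all[OF cls that(1)]] .
  have "sqsub_Gamma Ur R S" if ?le
    using Gamma_inj[OF that] rep U'_sub unfolding sqsub_Gamma_def rep_system_def
    by (subst bchoice_iff[symmetric]) blast
  moreover have "card (hom G R) \<le> card (hom G S)" if le: ?le and "G \<in> U'" for G
  proof -
    have G: "ugraph G" using \<open>G \<in> U'\<close> U'_sub by blast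
    then obtain \<rho> where "inj_on \<rho> (hom G R)" "\<rho> ` hom G R \<subseteq> hom G S"
      using Gamma_inj[OF le] by blast
    moreover have "finite (hom G S)" using G fin by (simp add: finite_hom ugraph_def)
    ultimately show ?thesis by (rule card_inj_on_le)
  qed
  ultimately show ?thesis
    using card_strict_hom_le_if_sqsub_Gamma[OF _ rep U'_sub fin] by blast
qed

end
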